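(* Let $p\in(0,1)$ be fixed, $q=1-p$, and let $r>0$ be real. For every integer $m\ge 1$, $$f_r(n)=\frac{np}{(np+q)^{r+1}}\left\{\sum_{k=0}^{m-1}(-1)^k\frac{\mu_k(n-1)}{(np+q)^k}\binom{r+k}{r}+O\!\left(n^{-\lceil m/2\rceil}\right)\right\}\quad\text{as } n\to\infty.$$ Moreover, for each fixed $k$, $\mu_k(n-1)/(np+q)^k=O\!\left(n^{-\lceil k/2\rceil}\right)$ as $n\to\infty$.
   Context: For a positive integer $n$, $p\in(0,1)$, $q=1-p$ and real $r>0$, define $f_r(n)=\sum_{i=1}^n\binom{n}{i}p^iq^{n-i}\,i^{-r}$ (this equals $(1-q^n)\,\mathbb{E}(1/X^r)$ for $X$ a binomial$(n,p)$ variable conditioned to be positive). For integers $N\ge 0$ and $k\ge 0$, $\mu_k(N)=\sum_{i=0}^N\binom{N}{i}p^iq^{N-i}(i-Np)^k$ is the $k$-th central moment of the binomial$(N,p)$ distribution (the sum includes $i=0$). For non-integer $r$, $\binom{r+k}{r}:=(r+1)(r+2)\cdots(r+k)/k!$ (and $=1$ for $k=0$). $\lceil x\rceil$ denotes the ceiling of $x$. *)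

theory Defs
  imports Complex_Main "HOL-Library.Landau_Symbols"
begin

definition f_r :: "real \<Rightarrow> real \<Rightarrow> nat \<Rightarrow> real" where
  "f_r p r n = (\<Sum>i=1..n. real (n choose i) * p ^ i * (1 - p) ^ (n - i) / (real i) powr r)"

definition mu :: "real \<Rightarrow> nat \<Rightarrow> nat \<Rightarrow> real" where
  "mu p k N = (\<Sum>i=0..N. real (N choose i) * p ^ i * (1 - p) ^ (N - i) * (real i - real N * p) ^ k)"

text \<open>Generalized binomial coefficient binom(r+k, r) = (r+1)...(r+k)/k!, which is (r+k) gchoose k.\<close>
definition binomr :: "real \<Rightarrow> nat \<Rightarrow> real" where
  "binomr r k = (r + real k) gchoose k"

end

theory Submission
  imports Defs
begin

text \<open>With $X \sim \mathrm{Bin}(n-1,p)$ the absorption identity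
  $\binom{n}{i+1} = \frac{n}{i+1}\binom{n-1}{i}$ gives $f_r(n) = np\,\mathbb{E}(X+1)^{-(r+1)}$.
  Writing $X + 1 = a(1 + x)$ with $a = np + q$ and $x = (X - (n-1)p)/a$, the Taylor expansion
  of $(1+x)^{-(r+1)}$ to order $m$ produces the main terms, because
  $\mathbb{E}\,x^k = \mu_k(n-1)/a^k$.
  The binomial recurrence shows that consecutive central moments differ by a combination of
  moments of order at most $k-2$, whence $\mu_k(N) = O(N^{\lfloor k/2 \rfloor})$ and
  $\mu_k(n-1)/a^k = O(n^{-\lceil k/2 \rceil})$.
  For even $m$ the Lagrange remainder is $O(x^m)$ where $x \ge -1/2$; on the rare event
  $x < -1/2$ it is at most $a^{r+1+m} \le a^{r+1+m}(2x)^{2J}$, whose expectation is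
  $O(n^{r+1+m-J})$ for every $J$. For odd $m$ one more term of the expansion is split off.\<close>

definition binom_expect :: "real \<Rightarrow> nat \<Rightarrow> (nat \<Rightarrow> real) \<Rightarrow> real" where
  "binom_expect p N g = (\<Sum>i=0..N. real (N choose i) * p ^ i * (1 - p) ^ (N - i) * g i)"

lemma binom_expect_add: "binom_expect p N (\<lambda>i. f i + g i) = binom_expect p N f + binom_expect p N g"
  unfolding binom_expect_def by (simp add: sum.distrib algebra_simps)

lemma binom_expect_cmult: "binom_expect p N (\<lambda>i. c * f i) = c * binom_expect p N f"
  unfolding binom_expect_def by (simp add: sum_distrib_left algebra_simps)

lemma binom_expect_sum:
  "binom_expect p N (\<lambda>i. \<Sum>j\<in>S. f j i) = (\<Sum>j\<in>S. binom_expect p N (f j))"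
  unfolding binom_expect_def
  by (simp add: sum_distrib_left sum_distrib_right mult.assoc sum.swap[of _ S])

lemma binom_expect_mono:
  assumes "0 \<le> p" "p \<le> 1" "\<And>i. f i \<le> g i"
  shows "binom_expect p N f \<le> binom_expect p N g"
  unfolding binom_expect_def using assms by (intro sum_mono mult_left_mono) auto

lemma binom_expect_abs_le:
  assumes "0 \<le> p" "p \<le> 1"
  shows "\<bar>binom_expect p N f\<bar> \<le> binom_expect p N (\<lambda>i. \<bar>f i\<bar>)"
proof -
  have "\<bar>binom_expect p N f\<bar>
      \<le> (\<Sum>i=0..N. \<bar>real (N choose i) * p ^ i * (1 - p) ^ (N - i) * f i\<bar>)"
    unfolding binom_expect_def by (rule sum_abs)
  also have "\<dots> = binom_expect p N (\<lambda>i. \<bar>f i\<bar>)"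
    unfolding binom_expect_def using assms by (intro sum.cong) (auto simp: abs_mult)
  finally show ?thesis .
qed

lemma binom_expect_Suc:
  "binom_expect p (Suc N) g = (1 - p) * binom_expect p N g + p * binom_expect p N (\<lambda>i. g (Suc i))"
proof -
  define q where "q = 1 - p"
  define w where "w M i = real (M choose i) * p ^ i * q ^ (M - i)" for M i
  have expect_eq: "binom_expect p M h = (\<Sum>i=0..M. w M i * h i)" for M h
    unfolding binom_expect_def w_def q_def ..
  have pascal: "w (Suc N) (Suc i) = q * w N (Suc i) + p * w N i" for i
  proof (cases "i < N")
    case True
    then have "N - i = Suc (N - Suc i)" by simp
    then show ?thesis by (simp add: w_def algebra_simps)
  qed (simp add: w_def binomial_eq_0 algebra_simps)
  have "binom_expect p (Suc N) g = q ^ Suc N * g 0 + (\<Sum>i=0..N. w (Suc N) (Suc i) * g (Suc i))"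
    unfolding expect_eq sum.atLeast0_atMost_Suc_shift by (simp add: w_def)
  also have "\<dots> = q * (q ^ N * g 0 + (\<Sum>i=0..N. w N (Suc i) * g (Suc i)))
                  + p * (\<Sum>i=0..N. w N i * g (Suc i))"
    unfolding pascal by (simp add: sum.distrib sum_distrib_left algebra_simps)
  also have "q ^ N * g 0 + (\<Sum>i=0..N. w N (Suc i) * g (Suc i)) = (\<Sum>i=0..Suc N. w N i * g i)"
    unfolding sum.atLeast0_atMost_Suc_shift by (simp add: w_def)
  also have "\<dots> = binom_expect p N g"
    unfolding expect_eq by (simp add: w_def)
  finally show ?thesis unfolding expect_eq q_def .
qed


lemma mu_eq_binom_expect: "mu p k N = binom_expect p N (\<lambda>i. (real i - real N * p) ^ k)"
  unfolding mu_def binom_expect_def ..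

lemma mu_zeroth: "mu p 0 N = 1"
proof -
  have "mu p 0 N = (p + (1 - p)) ^ N"
    unfolding mu_def binomial_ring by (simp add: atLeast0AtMost)
  then show ?thesis by simp
qed

definition bernoulli_central_moment :: "real \<Rightarrow> nat \<Rightarrow> real" where
  "bernoulli_central_moment p l = (1 - p) * (- p) ^ l + p * (1 - p) ^ l"

lemma abs_bernoulli_central_moment_le:
  assumes "0 \<le> p" "p \<le> 1"
  shows "\<bar>bernoulli_central_moment p l\<bar> \<le> 1"
proof -
  have "\<bar>bernoulli_central_moment p l\<bar> \<le> (1 - p) * p ^ l + p * (1 - p) ^ l"
    unfolding bernoulli_central_moment_def using assms
    by (intro order_trans[OF abs_triangle_ineq]) (simp add: abs_mult power_abs)
  also have "\<dots> \<le> (1 - p) * 1 + p * 1"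
    using assms by (intro add_mono mult_left_mono power_le_one) auto
  finally show ?thesis by simp
qed

text \<open>A binomial$(N+1,p)$ variable is a binomial$(N,p)$ variable plus an independent
  Bernoulli$(p)$ variable, so its central moments are binomial convolutions.\<close>
lemma mu_Suc:
  "mu p k (Suc N) = (\<Sum>j\<le>k. real (k choose j) * bernoulli_central_moment p (k - j) * mu p j N)"
proof -
  define d where "d i = real i - real N * p" for i :: nat
  have "mu p k (Suc N) = (1 - p) * binom_expect p N (\<lambda>i. (d i + (- p)) ^ k)
      + p * binom_expect p N (\<lambda>i. (d i + (1 - p)) ^ k)"
    unfolding mu_eq_binom_expect binom_expect_Suc d_def by (simp add: algebra_simps)
  also have "\<dots> = (1 - p) * (\<Sum>j\<le>k. real (k choose j) * (- p) ^ (k - j) * mu p j N)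
      + p * (\<Sum>j\<le>k. real (k choose j) * (1 - p) ^ (k - j) * mu p j N)"
    unfolding binomial_ring binom_expect_sum mu_eq_binom_expect d_def
    by (simp add: binom_expect_cmult[symmetric] mult.commute mult.left_commute)
  also have "\<dots> = (\<Sum>j\<le>k. real (k choose j) * bernoulli_central_moment p (k - j) * mu p j N)"
    unfolding bernoulli_central_moment_def sum_distrib_left sum.distrib[symmetric]
    by (rule sum.cong) (simp_all add: algebra_simps)
  finally show ?thesis .
qed

lemma mu_Suc_diff:
  "mu p k (Suc N) - mu p k N =
     (\<Sum>j<k - 1. real (k choose j) * bernoulli_central_moment p (k - j) * mu p j N)"
proof (cases k)
  case 0
  then show ?thesis by (simp add: mu_zeroth)
next
  case (Suc k')
  then show ?thesis
    unfolding mu_Suc sum.atMost_Suc lessThan_Suc_atMost[symmetric] sum.lessThan_Suc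
    by (simp add: bernoulli_central_moment_def)
qed

lemma abs_le_of_increments:
  fixes g :: "nat \<Rightarrow> real"
  assumes "\<And>N. \<bar>g (Suc N) - g N\<bar> \<le> D * (real N + 1) ^ e"
  shows "\<bar>g N\<bar> \<le> \<bar>g 0\<bar> + D * (real N + 1) ^ Suc e"
proof (induction N)
  case 0
  show ?case using assms[of 0] by simp
next
  case (Suc N)
  have "D \<ge> 0" using assms[of 0] by simp
  have "(real N + 1) ^ Suc e + (real N + 1) ^ e = (real N + 2) * (real N + 1) ^ e"
    by (simp add: algebra_simps)
  also have "\<dots> \<le> (real N + 2) * (real N + 2) ^ e"
    by (intro mult_left_mono power_mono) auto
  finally have "D * (real N + 1) ^ Suc e + D * (real N + 1) ^ e \<le> D * (real (Suc N) + 1) ^ Suc e"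
    using \<open>D \<ge> 0\<close> by (simp add: distrib_left[symmetric] mult_left_mono add.commute)
  then show ?case using Suc assms[of N] by linarith
qed

lemma mu_bound:
  assumes "0 \<le> p" "p \<le> 1"
  shows "\<exists>C. \<forall>N. \<bar>mu p k N\<bar> \<le> C * (real N + 1) ^ (k div 2)"
proof (induction k rule: less_induct)
  case (less k)
  obtain C where C: "\<And>j N. j < k \<Longrightarrow> \<bar>mu p j N\<bar> \<le> C j * (real N + 1) ^ (j div 2)"
    using less by metis
  have C_nonneg: "C j \<ge> 0" if "j < k" for j
    using order_trans[OF abs_ge_zero C[OF that, of 0]] by simp
  define D where "D = (\<Sum>j<k - 1. real (k choose j) * C j)"
  have increment: "\<bar>mu p k (Suc N) - mu p k N\<bar> \<le> D * (real N + 1) ^ (k div 2 - 1)" for N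
  proof -
    have "\<bar>real (k choose j) * bernoulli_central_moment p (k - j) * mu p j N\<bar>
          \<le> real (k choose j) * C j * (real N + 1) ^ (k div 2 - 1)" if "j < k - 1" for j
    proof -
      have "(real N + 1) ^ (j div 2) \<le> (real N + 1) ^ (k div 2 - 1)"
        using that by (intro power_increasing) auto
      moreover have "j < k" using that by simp
      ultimately have "\<bar>mu p j N\<bar> \<le> C j * (real N + 1) ^ (k div 2 - 1)"
        using C[of j N] C_nonneg[of j] by (meson mult_left_mono order_trans)
      moreover have "\<bar>bernoulli_central_moment p (k - j)\<bar> \<le> 1"
        using abs_bernoulli_central_moment_le[OF assms] .
      ultimately have "\<bar>bernoulli_central_moment p (k - j)\<bar> * \<bar>mu p j N\<bar>
          \<le> 1 * (C j * (real N + 1) ^ (k div 2 - 1))"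
        by (intro mult_mono) auto
      then show ?thesis
        unfolding abs_mult mult.assoc by (simp add: mult_left_mono)
    qed
    then have "\<bar>mu p k (Suc N) - mu p k N\<bar>
        \<le> (\<Sum>j<k - 1. real (k choose j) * C j * (real N + 1) ^ (k div 2 - 1))"
      unfolding mu_Suc_diff by (intro order_trans[OF sum_abs] sum_mono) auto
    then show ?thesis unfolding D_def sum_distrib_right .
  qed
  have "\<bar>mu p k N\<bar> \<le> \<bar>mu p k 0\<bar> + D * (real N + 1) ^ (k div 2)" for N
  proof (cases "k < 2")
    case True
    then have "D = 0" unfolding D_def by simp
    then show ?thesis using abs_le_of_increments[OF increment, of N] by simp
  next
    case False
    then have "Suc (k div 2 - 1) = k div 2" by simp
    then show ?thesis using abs_le_of_increments[OF increment, of N] by simp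
  qed
  moreover have "\<bar>mu p k 0\<bar> \<le> \<bar>mu p k 0\<bar> * (real N + 1) ^ (k div 2)" for N
    by (simp add: mult_le_cancel_left1 one_le_power)
  ultimately have "\<bar>mu p k N\<bar> \<le> (\<bar>mu p k 0\<bar> + D) * (real N + 1) ^ (k div 2)" for N
    unfolding distrib_right by (meson add_right_mono order_trans)
  then show ?case by blast
qed

definition binom_remainder :: "real \<Rightarrow> nat \<Rightarrow> real \<Rightarrow> real" where
  "binom_remainder r m x = (1 + x) powr (-(r + 1)) - (\<Sum>k<m. (-1) ^ k * binomr r k * x ^ k)"

lemma binomr_eq_pochhammer: "binomr r k = pochhammer (r + 1) k / fact k"
  unfolding binomr_def gbinomial_pochhammer' by simp

lemma binomr_pos: "r > -1 \<Longrightarrow> binomr r k > 0"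
  unfolding binomr_eq_pochhammer by (intro divide_pos_pos pochhammer_pos) auto

lemma binom_remainder_Suc:
  "binom_remainder r m x = (-1) ^ m * binomr r m * x ^ m + binom_remainder r (Suc m) x"
  unfolding binom_remainder_def by simp

lemma binom_remainder_Lagrange:
  assumes "m > 0" "x > -1"
  shows "\<exists>t. min 0 x \<le> t \<and> t \<le> max 0 x \<and>
    binom_remainder r m x = (-1) ^ m * binomr r m * (1 + t) powr (-(r + 1) - real m) * x ^ m"
proof -
  define diff where "diff k t = (-1) ^ k * pochhammer (r + 1) k * (1 + t) powr (-(r + 1) - real k)"
    for k t
  have diff_deriv: "DERIV (diff k) t :> diff (Suc k) t" if "t > -1" for k t
  proof -
    have "DERIV (\<lambda>t. (1 + t) powr (-(r + 1) - real k)) t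
          :> (-(r + 1) - real k) * (1 + t) powr (-(r + 1) - real k - 1)"
      using that by (auto intro!: derivative_eq_intros)
    from DERIV_cmult[OF this, of "(-1) ^ k * pochhammer (r + 1) k"] show ?thesis
      unfolding diff_def pochhammer_Suc by (simp add: algebra_simps)
  qed
  have diff_0: "diff 0 = (\<lambda>t. (1 + t) powr (-(r + 1)))"
    unfolding diff_def by auto
  have coeff: "diff k t / fact k = (-1) ^ k * binomr r k * (1 + t) powr (-(r + 1) - real k)" for k t
    unfolding diff_def binomr_eq_pochhammer by simp
  consider "x = 0" | "x > 0" | "x < 0" by linarith
  then show ?thesis
  proof cases
    case 1
    with \<open>m > 0\<close> show ?thesis
      by (intro exI[of _ 0]) (simp add: binom_remainder_def binomr_def zero_power)
  next
    case 2
    from Maclaurin[of x m diff, OF 2 \<open>m > 0\<close> diff_0] diff_deriv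
    obtain t where "0 < t" "t < x"
      "(1 + x) powr (-(r + 1)) = (\<Sum>k<m. diff k 0 / fact k * x ^ k) + diff m t / fact m * x ^ m"
      by force
    then show ?thesis
      by (intro exI[of _ t]) (simp add: binom_remainder_def coeff)
  next
    case 3
    from Maclaurin_minus[of x m diff, OF 3 \<open>m > 0\<close> diff_0] diff_deriv \<open>x > -1\<close>
    obtain t where "x < t" "t < 0"
      "(1 + x) powr (-(r + 1)) = (\<Sum>k<m. diff k 0 / fact k * x ^ k) + diff m t / fact m * x ^ m"
      by force
    then show ?thesis
      by (intro exI[of _ t]) (simp add: binom_remainder_def coeff)
  qed
qed

lemma abs_binom_remainder_le:
  assumes "r > -1" "m > 0" "x > -1"
  shows "\<bar>binom_remainder r m x\<bar>
    \<le> binomr r m * (1 + min 0 x) powr (-(r + 1 + m)) * \<bar>x\<bar> ^ m"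
proof -
  obtain t where t: "min 0 x \<le> t" "t \<le> max 0 x"
    and eq: "binom_remainder r m x = (-1) ^ m * binomr r m * (1 + t) powr (-(r + 1) - real m) * x ^ m"
    using binom_remainder_Lagrange[OF assms(2,3)] by blast
  have "(1 + t) powr (-(r + 1 + m)) \<le> (1 + min 0 x) powr (-(r + 1 + m))"
    using assms t by (intro powr_mono2') auto
  then show ?thesis
    unfolding eq using binomr_pos[OF assms(1), of m]
    by (simp add: abs_mult power_abs mult_left_mono mult_right_mono)
qed

lemma abs_binom_remainder_le_split:
  assumes "r > -1" "m > 0" "A > 0" "1 / A \<le> 1 + x"
  shows "\<bar>binom_remainder r m x\<bar>
    \<le> binomr r m * (2 powr (r + 1 + m) * \<bar>x\<bar> ^ m + A powr (r + 1 + m) * (2 * x) ^ (2 * J))"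
proof -
  define E where "E = r + 1 + m"
  define B where "B = binomr r m"
  have "E > 0" "B > 0"
    using assms(1) binomr_pos[OF assms(1)] unfolding E_def B_def by auto
  have "1 / A > 0" using assms(3) by simp
  then have "x > -1" using assms(4) by linarith
  have bound: "\<bar>binom_remainder r m x\<bar> \<le> B * (1 + min 0 x) powr (- E) * \<bar>x\<bar> ^ m"
    using abs_binom_remainder_le[OF assms(1,2) \<open>x > -1\<close>] unfolding B_def E_def .
  have near_nonneg: "0 \<le> 2 powr E * \<bar>x\<bar> ^ m" and far_nonneg: "0 \<le> A powr E * (2 * x) ^ (2 * J)"
    by (simp_all add: power_mult)
  show ?thesis
  proof (cases "x \<ge> -1/2")
    case True
    have "(1 + min 0 x) powr (- E) \<le> (1 / 2) powr (- E)"
      using True \<open>E > 0\<close> by (intro powr_mono2') auto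
    also have "\<dots> = 2 powr E"
      by (simp add: powr_minus_divide powr_divide)
    finally have "B * (1 + min 0 x) powr (- E) * \<bar>x\<bar> ^ m \<le> B * 2 powr E * \<bar>x\<bar> ^ m"
      using \<open>B > 0\<close> by (intro mult_right_mono mult_left_mono) auto
    also have "\<dots> \<le> B * (2 powr E * \<bar>x\<bar> ^ m + A powr E * (2 * x) ^ (2 * J))"
      using \<open>B > 0\<close> far_nonneg by (simp add: mult.assoc)
    finally show ?thesis
      using bound unfolding B_def E_def by linarith
  next
    case False
    have "(1 + min 0 x) powr (- E) \<le> (1 / A) powr (- E)"
      using False assms(3,4) \<open>E > 0\<close> by (intro powr_mono2') auto
    also have "\<dots> = A powr E"
      using assms(3) by (simp add: powr_minus_divide powr_divide)
    finally have "(1 + min 0 x) powr (- E) \<le> A powr E" .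
    moreover have "\<bar>x\<bar> ^ m \<le> (2 * x) ^ (2 * J)"
    proof -
      have "\<bar>x\<bar> ^ m \<le> 1" using False \<open>x > -1\<close> by (intro power_le_one) auto
      also have "1 \<le> (- (2 * x)) ^ (2 * J)" using False by (intro one_le_power) auto
      finally show ?thesis by simp
    qed
    ultimately have "B * (1 + min 0 x) powr (- E) * \<bar>x\<bar> ^ m \<le> B * (A powr E * (2 * x) ^ (2 * J))"
      using \<open>B > 0\<close> unfolding mult.assoc by (intro mult_left_mono mult_mono) auto
    also have "\<dots> \<le> B * (2 powr E * \<bar>x\<bar> ^ m + A powr E * (2 * x) ^ (2 * J))"
      using \<open>B > 0\<close> near_nonneg by simp
    finally show ?thesis
      using bound unfolding B_def E_def by linarith
  qed
qed

definition scaled_deviation :: "real \<Rightarrow> nat \<Rightarrow> nat \<Rightarrow> real" where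
  "scaled_deviation p n i = (real i - real (n - 1) * p) / (real n * p + (1 - p))"

definition f_r_remainder :: "real \<Rightarrow> real \<Rightarrow> nat \<Rightarrow> nat \<Rightarrow> real" where
  "f_r_remainder p r m n =
     binom_expect p (n - 1) (\<lambda>i. binom_remainder r m (scaled_deviation p n i))"

lemma binom_expect_scaled_deviation_power:
  "binom_expect p (n - 1) (\<lambda>i. scaled_deviation p n i ^ k) =
     mu p k (n - 1) / (real n * p + (1 - p)) ^ k"
proof -
  have "binom_expect p (n - 1) (\<lambda>i. scaled_deviation p n i ^ k) =
      binom_expect p (n - 1) (\<lambda>i. 1 / (real n * p + (1 - p)) ^ k * (real i - real (n - 1) * p) ^ k)"
    unfolding scaled_deviation_def by (simp add: power_divide)
  then show ?thesis
    unfolding binom_expect_cmult mu_eq_binom_expect by simp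
qed

lemma f_r_Suc_eq_binom_expect:
  "f_r p r (Suc N) = real (Suc N) * p * binom_expect p N (\<lambda>i. (real i + 1) powr (-(r + 1)))"
proof -
  have "real (Suc N choose Suc i) * p ^ Suc i * (1 - p) ^ (Suc N - Suc i) / real (Suc i) powr r =
      real (Suc N) * p * (real (N choose i) * p ^ i * (1 - p) ^ (N - i) * (real i + 1) powr (-(r + 1)))"
    for i
  proof -
    have "real (Suc i) * real (Suc N choose Suc i) = real (Suc N) * real (N choose i)"
      unfolding of_nat_mult[symmetric] Suc_times_binomial ..
    then have binomial: "real (Suc N choose Suc i) = real (Suc N) * real (N choose i) / real (Suc i)"
      by (simp add: eq_divide_eq mult.commute del: of_nat_Suc)
    have power: "(real i + 1) powr (-(r + 1)) = 1 / (real (Suc i) powr r * real (Suc i))"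
      unfolding powr_minus_divide by (simp add: powr_add add.commute)
    show ?thesis
      unfolding binomial power by (simp add: divide_simps ac_simps)
  qed
  then show ?thesis
    unfolding f_r_def binom_expect_def sum_distrib_left One_nat_def sum.atLeast_Suc_atMost_Suc_shift
    by (simp add: atLeast0AtMost)
qed

lemma f_r_expansion:
  assumes "0 \<le> p" "n \<ge> 1"
  shows "f_r p r n = real n * p / (real n * p + (1 - p)) powr (r + 1) *
    ((\<Sum>k<m. (-1) ^ k * mu p k (n - 1) / (real n * p + (1 - p)) ^ k * binomr r k)
      + f_r_remainder p r m n)"
proof -
  define a where "a = real n * p + (1 - p)"
  define x where "x = scaled_deviation p n"
  define S where "S i = (\<Sum>k<m. (-1) ^ k * binomr r k * x i ^ k)" for i
  have "p * 1 \<le> p * real n" using assms by (intro mult_left_mono) auto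
  then have "a \<ge> 1" unfolding a_def by (simp add: algebra_simps)
  have "real i + 1 = a * (1 + x i)" for i
    using \<open>a \<ge> 1\<close> assms(2) unfolding x_def scaled_deviation_def a_def
    by (simp add: field_simps of_nat_diff)
  then have expand: "(real i + 1) powr (-(r + 1)) =
      a powr (-(r + 1)) * (S i + binom_remainder r m (x i))" for i
    using \<open>a \<ge> 1\<close> zero_le_mult_iff[of a "1 + x i"]
    by (simp add: binom_remainder_def S_def powr_mult)
  have "f_r p r n = real n * p * binom_expect p (n - 1) (\<lambda>i. (real i + 1) powr (-(r + 1)))"
    using f_r_Suc_eq_binom_expect[of p r "n - 1"] assms(2) by simp
  also have "\<dots> = real n * p * (a powr (-(r + 1)) *
      (binom_expect p (n - 1) S + binom_expect p (n - 1) (\<lambda>i. binom_remainder r m (x i))))"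
    by (simp only: expand binom_expect_cmult binom_expect_add)
  also have "binom_expect p (n - 1) S = (\<Sum>k<m. (-1) ^ k * mu p k (n - 1) / a ^ k * binomr r k)"
    unfolding S_def binom_expect_sum binom_expect_cmult x_def binom_expect_scaled_deviation_power
    by (simp add: a_def algebra_simps)
  also have "binom_expect p (n - 1) (\<lambda>i. binom_remainder r m (x i)) = f_r_remainder p r m n"
    unfolding f_r_remainder_def x_def ..
  finally show ?thesis
    unfolding a_def powr_minus_divide by simp
qed

lemma f_r_remainder_Suc:
  "f_r_remainder p r m n =
     (-1) ^ m * binomr r m * (mu p m (n - 1) / (real n * p + (1 - p)) ^ m)
     + f_r_remainder p r (Suc m) n"
  unfolding f_r_remainder_def binom_remainder_Suc[of r m] binom_expect_add binom_expect_cmult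
    binom_expect_scaled_deviation_power ..

lemma abs_f_r_remainder_le:
  assumes "0 \<le> p" "p \<le> 1" "r > -1" "m > 0" "n \<ge> 1"
  defines "a \<equiv> real n * p + (1 - p)"
  shows "\<bar>f_r_remainder p r m n\<bar> \<le> binomr r m *
    (2 powr (r + 1 + m) * binom_expect p (n - 1) (\<lambda>i. \<bar>scaled_deviation p n i\<bar> ^ m)
     + a powr (r + 1 + m) * 4 ^ J * (mu p (2 * J) (n - 1) / a ^ (2 * J)))"
proof -
  have "p * 1 \<le> p * real n" using assms(1,5) by (intro mult_left_mono) auto
  then have "a \<ge> 1" unfolding a_def by (simp add: algebra_simps)
  have "1 / a \<le> 1 + scaled_deviation p n i" for i
  proof -
    have "1 + scaled_deviation p n i = (real i + 1) / a"
      using \<open>a \<ge> 1\<close> assms(5) unfolding scaled_deviation_def a_def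
      by (simp add: field_simps of_nat_diff)
    then show ?thesis using \<open>a \<ge> 1\<close> by (simp add: divide_right_mono)
  qed
  then have "\<bar>binom_remainder r m (scaled_deviation p n i)\<bar> \<le> binomr r m *
      (2 powr (r + 1 + m) * \<bar>scaled_deviation p n i\<bar> ^ m
       + a powr (r + 1 + m) * 4 ^ J * scaled_deviation p n i ^ (2 * J))" for i
    using abs_binom_remainder_le_split[OF assms(3,4), of a, where J = J] \<open>a \<ge> 1\<close>
    by (simp add: power_mult_distrib power_mult mult.assoc)
  then have "\<bar>f_r_remainder p r m n\<bar> \<le> binom_expect p (n - 1) (\<lambda>i. binomr r m *
      (2 powr (r + 1 + m) * \<bar>scaled_deviation p n i\<bar> ^ m
       + a powr (r + 1 + m) * 4 ^ J * scaled_deviation p n i ^ (2 * J)))"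
    unfolding f_r_remainder_def
    using assms(1,2) by (intro order_trans[OF binom_expect_abs_le binom_expect_mono]) auto
  then show ?thesis
    unfolding binom_expect_cmult binom_expect_add binom_expect_scaled_deviation_power a_def .
qed

lemma ceiling_half: "\<lceil>real k / 2\<rceil> = int (k - k div 2)"
proof (cases "even k")
  case True
  then show ?thesis by (auto elim!: evenE)
next
  case False
  then obtain q where "k = 2 * q + 1" by (rule oddE)
  then show ?thesis by (intro ceiling_unique) auto
qed

lemma mu_ratio_bigo:
  assumes "0 < p" "p \<le> 1"
  shows "(\<lambda>n. mu p k (n - 1) / (real n * p + (1 - p)) ^ k)
           \<in> O(\<lambda>n. real n powr - of_int \<lceil>real k / 2\<rceil>)"
proof -
  obtain C where C: "\<And>N. \<bar>mu p k N\<bar> \<le> C * (real N + 1) ^ (k div 2)"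
    using mu_bound assms by (meson less_imp_le)
  have "\<bar>mu p k (n - 1) / (real n * p + (1 - p)) ^ k\<bar>
      \<le> C / p ^ k * real n powr - of_int \<lceil>real k / 2\<rceil>"
    if "n \<ge> 1" for n
  proof -
    have "(real n * p) ^ k \<le> (real n * p + (1 - p)) ^ k"
      using assms that by (intro power_mono) auto
    moreover have "\<bar>mu p k (n - 1)\<bar> \<le> C * real n ^ (k div 2)"
      using C[of "n - 1"] that by (simp add: of_nat_diff)
    moreover have "0 < real n * p" using assms that by simp
    ultimately have "\<bar>mu p k (n - 1) / (real n * p + (1 - p)) ^ k\<bar>
        \<le> C * real n ^ (k div 2) / (real n * p) ^ k"
      unfolding abs_divide using order_trans[OF abs_ge_zero C[of 0]]
      by (intro frac_le) auto
    also have "\<dots> = C / p ^ k * (1 / real n ^ (k - k div 2))"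
      using that by (simp add: power_mult_distrib power_diff)
    also have "1 / real n ^ (k - k div 2) = real n powr - of_int \<lceil>real k / 2\<rceil>"
      unfolding ceiling_half of_int_of_nat_eq powr_minus_divide using that by (subst powr_realpow) auto
    finally show ?thesis .
  qed
  then show ?thesis
    by (intro bigoI[of _ "C / p ^ k"]) (auto simp: eventually_at_top_linorder)
qed

lemma f_r_remainder_bigo_even:
  assumes "0 < p" "p \<le> 1" "r > -1" "m > 0" "even m"
  shows "f_r_remainder p r m \<in> O(\<lambda>n. real n powr - of_int \<lceil>real m / 2\<rceil>)"
proof -
  obtain J :: nat where J: "r + 1 + 2 * m \<le> real J"
    using real_arch_simple by blast
  define E where "E = r + 1 + m"
  define a where "a n = real n * p + (1 - p)" for n
  define ratio where "ratio k n = mu p k (n - 1) / a n ^ k" for k n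
  have ratio_bigo: "ratio k \<in> O(\<lambda>n. real n powr - of_int \<lceil>real k / 2\<rceil>)" for k
    using mu_ratio_bigo[OF assms(1,2)] unfolding ratio_def a_def .
  define g where "g n = binomr r m * (2 powr E * ratio m n + 4 ^ J * (a n powr E * ratio (2 * J) n))"
    for n
  have "\<bar>f_r_remainder p r m n\<bar> \<le> g n" if "n \<ge> 1" for n
  proof -
    have "binom_expect p (n - 1) (\<lambda>i. \<bar>scaled_deviation p n i\<bar> ^ m) = ratio m n"
      using \<open>even m\<close> binom_expect_scaled_deviation_power[of p n m]
      by (simp add: ratio_def a_def power_even_abs)
    then show ?thesis
      using abs_f_r_remainder_le[OF less_imp_le[OF assms(1)] assms(2-4) that, of J]
      by (simp add: g_def E_def ratio_def a_def algebra_simps)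
  qed
  then have "f_r_remainder p r m \<in> O(g)"
    by (intro bigoI[of _ 1]) (auto simp: eventually_at_top_linorder intro: order_trans[OF _ abs_ge_self])
  also have "g \<in> O(\<lambda>n. real n powr - of_int \<lceil>real m / 2\<rceil>)"
  proof -
    have "a n powr E \<le> real n powr E" if "n \<ge> 1" for n
    proof (rule powr_mono2)
      have "(1 - p) * 1 \<le> (1 - p) * real n" using assms(2) that by (intro mult_left_mono) auto
      then show "a n \<le> real n" unfolding a_def by (simp add: algebra_simps)
      show "0 \<le> a n" using assms(1,2) unfolding a_def by simp
      show "0 \<le> E" using assms(3) unfolding E_def by simp
    qed
    then have "(\<lambda>n. a n powr E) \<in> O(\<lambda>n. real n powr E)"
      by (intro bigoI[of _ 1]) (auto simp: eventually_at_top_linorder)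
    from landau_o.big.mult[OF this ratio_bigo[of "2 * J"]]
    have "(\<lambda>n. a n powr E * ratio (2 * J) n) \<in> O(\<lambda>n. real n powr (E - J))"
      by (simp add: powr_add[symmetric])
    also have "(\<lambda>n. real n powr (E - J)) \<in> O(\<lambda>n. real n powr - of_int \<lceil>real m / 2\<rceil>)"
      using J unfolding E_def ceiling_half
      by (subst powr_bigo_iff) (auto simp: filterlim_real_sequentially)
    finally show ?thesis
      unfolding g_def using ratio_bigo[of m] by (simp add: sum_in_bigo)
  qed
  finally show ?thesis .
qed

lemma f_r_remainder_bigo:
  assumes "0 < p" "p \<le> 1" "r > -1" "m > 0"
  shows "f_r_remainder p r m \<in> O(\<lambda>n. real n powr - of_int \<lceil>real m / 2\<rceil>)"
proof (cases "even m")
  case True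
  with f_r_remainder_bigo_even assms show ?thesis by blast
next
  case False
  have "\<lceil>real (Suc m) / 2\<rceil> = \<lceil>real m / 2\<rceil>"
    using False unfolding ceiling_half by presburger
  then have "f_r_remainder p r (Suc m) \<in> O(\<lambda>n. real n powr - of_int \<lceil>real m / 2\<rceil>)"
    using f_r_remainder_bigo_even[OF assms(1-3), of "Suc m"] False by simp
  moreover have "(\<lambda>n. mu p m (n - 1) / (real n * p + (1 - p)) ^ m)
      \<in> O(\<lambda>n. real n powr - of_int \<lceil>real m / 2\<rceil>)"
    using mu_ratio_bigo[OF assms(1,2)] .
  then have "(\<lambda>n. (-1) ^ m * binomr r m * (mu p m (n - 1) / (real n * p + (1 - p)) ^ m))
      \<in> O(\<lambda>n. real n powr - of_int \<lceil>real m / 2\<rceil>)"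
    by (simp only: cmult_in_bigo_iff) blast
  ultimately show ?thesis
    unfolding f_r_remainder_Suc[of p r m] by (rule sum_in_bigo(1)[rotated])
qed

theorem theorem1:
  fixes p r :: real
  assumes "0 < p" "p < 1" "0 < r"
  shows "(\<forall>m::nat. m \<ge> 1 \<longrightarrow>
           (\<exists>R :: nat \<Rightarrow> real.
              R \<in> O[at_top](\<lambda>n. real n powr (- of_int \<lceil>real m / 2\<rceil>)) \<and>
              (\<forall>\<^sub>F n in at_top.
                 f_r p r n = real n * p / (real n * p + (1 - p)) powr (r + 1) *
                   ((\<Sum>k<m. (-1) ^ k * mu p k (n - 1) / (real n * p + (1 - p)) ^ k * binomr r k)
                    + R n))))
       \<and> (\<forall>k::nat. (\<lambda>n. mu p k (n - 1) / (real n * p + (1 - p)) ^ k)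
              \<in> O[at_top](\<lambda>n. real n powr (- of_int \<lceil>real k / 2\<rceil>)))"
proof (intro conjI allI impI)
  fix k :: nat
  show "(\<lambda>n. mu p k (n - 1) / (real n * p + (1 - p)) ^ k)
      \<in> O(\<lambda>n. real n powr - of_int \<lceil>real k / 2\<rceil>)"
    using mu_ratio_bigo assms by simp
next
  fix m :: nat
  assume "m \<ge> 1"
  have "f_r_remainder p r m \<in> O(\<lambda>n. real n powr - of_int \<lceil>real m / 2\<rceil>)"
    using f_r_remainder_bigo assms \<open>m \<ge> 1\<close> by simp
  moreover have "\<forall>\<^sub>F n in at_top. f_r p r n = real n * p / (real n * p + (1 - p)) powr (r + 1) *
      ((\<Sum>k<m. (-1) ^ k * mu p k (n - 1) / (real n * p + (1 - p)) ^ k * binomr r k)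
        + f_r_remainder p r m n)"
    by (rule eventually_mono[OF eventually_ge_at_top[of 1]])
      (rule f_r_expansion[OF less_imp_le[OF assms(1)]])
  ultimately show "\<exists>R. R \<in> O(\<lambda>n. real n powr - of_int \<lceil>real m / 2\<rceil>) \<and>
      (\<forall>\<^sub>F n in at_top. f_r p r n = real n * p / (real n * p + (1 - p)) powr (r + 1) *
        ((\<Sum>k<m. (-1) ^ k * mu p k (n - 1) / (real n * p + (1 - p)) ^ k * binomr r k) + R n))"
    by blast
qed

end
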